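(* Let $Q:[0,k_{\text{crit}}]\to[0,\infty)$ be three times differentiable, strictly increasing with $Q'>0$, concave ($Q''\le 0$), with $Q(0)=0$ and $Q'''\le 0$. Let $k(q)$ denote the inverse function of $Q$ on $[0,Q(k_{\text{crit}})]$ and define $\frac{dN}{dx}(q)=q\,k'(q)-k(q)$. Then $\frac{dN}{dx}$ is monotonically increasing and convex in $q$.
   Context: $Q$ is the free-flow branch of a traffic fundamental diagram (flow as a function of density); the condition $Q'''\le 0$ corresponds to aggressive driving ($v''(k)\le0$ for $v(k)=Q(k)/k$). The quantity $q k'(q)-k(q)$ is the rate of change of the cumulative vehicle count per unit distance along a kinematic wave carrying constant flow $q$. *)

theory Defs
  imports "HOL-Analysis.Analysis"
begin

end

theory Submission
  imports Defs
begin

text \<open>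
  Differentiating the identity \<open>Q (k q) = q\<close> gives \<open>k' = 1 / Q' \<circ> k\<close>, hence
  \<open>dN/dx = q / Q'(k q) - k q\<close> has derivative \<open>- q Q''(k q) / Q'(k q)^3\<close>, i.e. \<open>q k''(q)\<close>.
  This derivative is nonnegative, and it is nondecreasing because \<open>k\<close> is increasing,
  \<open>Q'\<close> is positive and decreasing (\<open>Q'' \<le> 0\<close>), and \<open>- Q''\<close> is nonnegative and
  increasing (\<open>Q''' \<le> 0\<close>).
\<close>

lemma mvt_within_Icc:
  fixes f f' :: "real \<Rightarrow> real"
  assumes f: "\<And>t. t \<in> {a..b} \<Longrightarrow> (f has_real_derivative f' t) (at t within {a..b})"
    and "a \<le> x" "x < y" "y \<le> b"
  obtains \<xi> where "x < \<xi>" "\<xi> < y" "f y - f x = f' \<xi> * (y - x)"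
proof -
  have "(f has_derivative (*) (f' t)) (at t within {x..y})" if "x \<le> t" "t \<le> y" for t
    using f[of t] that assms(2-4)
    by (auto simp: has_field_derivative_def intro: has_derivative_subset)
  then obtain \<xi> where "\<xi> \<in> {x<..<y}" "f y - f x = f' \<xi> * (y - x)"
    using mvt_simple[OF \<open>x < y\<close>, of f "\<lambda>t. (*) (f' t)"] by blast
  then show ?thesis using that by auto
qed

lemma mono_on_Icc_realI:
  fixes f f' :: "real \<Rightarrow> real"
  assumes f: "\<And>t. t \<in> {a..b} \<Longrightarrow> (f has_real_derivative f' t) (at t within {a..b})"
    and nonneg: "\<And>t. t \<in> {a..b} \<Longrightarrow> f' t \<ge> 0"
  shows "mono_on {a..b} f"
proof (rule mono_onI)
  fix x y assume xy: "x \<in> {a..b}" "y \<in> {a..b}" "x \<le> y"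
  show "f x \<le> f y"
  proof (cases "x = y")
    case False
    with xy obtain \<xi> where "x < \<xi>" "\<xi> < y" "f y - f x = f' \<xi> * (y - x)"
      using mvt_within_Icc[OF f, of x y] by auto
    moreover from this xy nonneg[of \<xi>] have "0 \<le> f' \<xi> * (y - x)" by simp
    ultimately show ?thesis by simp
  qed simp
qed

lemma antimono_on_Icc_realI:
  fixes f f' :: "real \<Rightarrow> real"
  assumes f: "\<And>t. t \<in> {a..b} \<Longrightarrow> (f has_real_derivative f' t) (at t within {a..b})"
    and nonpos: "\<And>t. t \<in> {a..b} \<Longrightarrow> f' t \<le> 0"
  shows "antimono_on {a..b} f"
proof -
  have "mono_on {a..b} (\<lambda>t. - f t)"
    by (rule mono_on_Icc_realI[where f' = "\<lambda>t. - f' t"])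
      (use f nonpos in \<open>auto intro: derivative_intros\<close>)
  then show ?thesis by (auto simp: monotone_on_def)
qed

lemma convex_on_Icc_realI:
  fixes f f' :: "real \<Rightarrow> real"
  assumes f: "\<And>t. t \<in> {a..b} \<Longrightarrow> (f has_real_derivative f' t) (at t within {a..b})"
    and mono: "mono_on {a..b} f'"
  shows "convex_on {a..b} f"
proof (rule convex_on_linorderI)
  fix t x y :: real
  assume t: "0 < t" "t < 1" and xy: "x \<in> {a..b}" "y \<in> {a..b}" "x < y"
  define z where "z = (1 - t) * x + t * y"
  have zx: "z - x = t * (y - x)" and yz: "y - z = (1 - t) * (y - x)"
    by (simp_all add: z_def algebra_simps)
  have xz: "x < z" using zx mult_pos_pos[of t "y - x"] t xy by linarith
  have zy: "z < y" using yz mult_pos_pos[of "1 - t" "y - x"] t xy by linarith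
  obtain \<xi> where \<xi>: "x < \<xi>" "\<xi> < z" "f z - f x = f' \<xi> * (z - x)"
    using mvt_within_Icc[OF f, of x z] xy xz zy by auto
  obtain \<eta> where \<eta>: "z < \<eta>" "\<eta> < y" "f y - f z = f' \<eta> * (y - z)"
    using mvt_within_Icc[OF f, of z y] xy xz zy by auto
  have "f' \<xi> \<le> f' \<eta>"
    using \<xi> \<eta> xy by (intro mono_onD[OF mono]) auto
  have "(1 - t) * f x + t * f y - f z = t * (f y - f z) - (1 - t) * (f z - f x)"
    by (simp add: algebra_simps)
  also have "\<dots> = t * (1 - t) * (y - x) * (f' \<eta> - f' \<xi>)"
    unfolding \<xi>(3) \<eta>(3) zx yz by (simp add: algebra_simps)
  also have "\<dots> \<ge> 0"
    using t xy \<open>f' \<xi> \<le> f' \<eta>\<close> by simp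
  finally show "f ((1 - t) *\<^sub>R x + t *\<^sub>R y) \<le> (1 - t) * f x + t * f y"
    by (simp add: z_def)
qed simp

lemma right_inverse_derivative_mult_eq_1:
  fixes Q k :: "real \<Rightarrow> real"
  assumes "c < d" "q \<in> {c..d}"
    and k: "(k has_real_derivative k') (at q within {c..d})"
    and Q: "(Q has_real_derivative Q') (at (k q) within S)"
    and "k ` {c..d} \<subseteq> S"
    and inverse: "\<And>p. p \<in> {c..d} \<Longrightarrow> Q (k p) = p"
  shows "Q' * k' = 1"
proof (rule has_field_derivative_unique)
  have "(Q \<circ> k has_real_derivative Q' * k') (at q within {c..d})"
    using DERIV_image_chain[OF has_field_derivative_subset[OF Q \<open>k ` {c..d} \<subseteq> S\<close>] k] .
  then show "((\<lambda>p. p) has_real_derivative Q' * k') (at q within {c..d})"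
    by (rule has_field_derivative_transform_within[OF _ zero_less_one \<open>q \<in> {c..d}\<close>])
      (simp add: inverse)
  show "((\<lambda>p. p) has_real_derivative 1) (at q within {c..d})"
    by (rule DERIV_ident)
  show "at q within {c..d} \<noteq> bot"
    using assms(1,2) by (simp add: trivial_limit_within)
qed

lemma dNdx_has_real_derivative:
  fixes k k' Q' Q'' :: "real \<Rightarrow> real"
  assumes k'_eq: "\<And>p. p \<in> T \<Longrightarrow> k' p = 1 / Q' (k p)" and "q \<in> T"
    and k: "(k has_real_derivative k' q) (at q within T)"
    and Q': "(Q' has_real_derivative Q'' (k q)) (at (k q) within S)" and "k ` T \<subseteq> S"
    and Q'_nz: "Q' (k q) \<noteq> 0"
  shows "((\<lambda>p. p * k' p - k p) has_real_derivative - q * Q'' (k q) / Q' (k q) ^ 3)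
    (at q within T)"
proof -
  have dk: "(k has_real_derivative 1 / Q' (k q)) (at q within T)"
    using k k'_eq \<open>q \<in> T\<close> by simp
  have "(Q' \<circ> k has_real_derivative Q'' (k q) * (1 / Q' (k q))) (at q within T)"
    using DERIV_image_chain[OF has_field_derivative_subset[OF Q' \<open>k ` T \<subseteq> S\<close>] dk] .
  then have "((\<lambda>p. p / Q' (k p) - k p) has_real_derivative
      (1 * Q' (k q) - q * (Q'' (k q) * (1 / Q' (k q)))) / (Q' (k q) * Q' (k q)) - 1 / Q' (k q))
      (at q within T)"
    using Q'_nz by (intro DERIV_diff DERIV_divide DERIV_ident dk) (simp_all add: o_def)
  also have "(1 * Q' (k q) - q * (Q'' (k q) * (1 / Q' (k q)))) / (Q' (k q) * Q' (k q)) - 1 / Q' (k q)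
      = - q * Q'' (k q) / Q' (k q) ^ 3"
    using Q'_nz by (simp add: field_simps power3_eq_cube)
  finally show ?thesis
    by (rule has_field_derivative_transform_within[OF _ zero_less_one \<open>q \<in> T\<close>])
      (simp add: k'_eq)
qed

lemma mono_on_dNdx_derivative:
  fixes k Q' Q'' :: "real \<Rightarrow> real"
  assumes T_nonneg: "T \<subseteq> {0..}" and k_mono: "mono_on T k" and k_maps: "k ` T \<subseteq> S"
    and Q'_anti: "antimono_on S Q'" and Q'_pos: "\<And>x. x \<in> S \<Longrightarrow> Q' x > 0"
    and Q''_anti: "antimono_on S Q''" and Q''_nonpos: "\<And>x. x \<in> S \<Longrightarrow> Q'' x \<le> 0"
  shows "mono_on T (\<lambda>q. - q * Q'' (k q) / Q' (k q) ^ 3)"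
proof (rule mono_onI)
  fix p q assume pq: "p \<in> T" "q \<in> T" "p \<le> q"
  then have k: "k p \<in> S" "k q \<in> S" "k p \<le> k q"
    using k_mono k_maps by (auto dest: mono_onD)
  have "p * - Q'' (k p) \<le> q * - Q'' (k q)"
    using pq k T_nonneg Q''_nonpos monotone_onD[OF Q''_anti] by (intro mult_mono) auto
  moreover have "Q' (k q) ^ 3 \<le> Q' (k p) ^ 3"
    using k Q'_pos monotone_onD[OF Q'_anti] by (intro power_mono) (auto simp: less_imp_le)
  ultimately show "- p * Q'' (k p) / Q' (k p) ^ 3 \<le> - q * Q'' (k q) / Q' (k q) ^ 3"
    using pq k T_nonneg Q'_pos Q''_nonpos by (intro frac_le) (auto intro: mult_nonneg_nonpos)
qed

theorem lemma5:
  fixes Q Q1 Q2 Q3 :: "real \<Rightarrow> real" and kc :: real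
    and k k' :: "real \<Rightarrow> real"
  assumes kc_pos: "kc > 0"
    and Q_range: "\<And>x. x \<in> {0..kc} \<Longrightarrow> Q x \<ge> 0"
    and dQ: "\<And>x. x \<in> {0..kc} \<Longrightarrow> (Q has_real_derivative Q1 x) (at x within {0..kc})"
    and dQ1: "\<And>x. x \<in> {0..kc} \<Longrightarrow> (Q1 has_real_derivative Q2 x) (at x within {0..kc})"
    and dQ2: "\<And>x. x \<in> {0..kc} \<Longrightarrow> (Q2 has_real_derivative Q3 x) (at x within {0..kc})"
    and Q_strict: "strict_mono_on {0..kc} Q"
    and Q1_pos: "\<And>x. x \<in> {0..kc} \<Longrightarrow> Q1 x > 0"
    and Q2_nonpos: "\<And>x. x \<in> {0..kc} \<Longrightarrow> Q2 x \<le> 0"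
    and Q3_nonpos: "\<And>x. x \<in> {0..kc} \<Longrightarrow> Q3 x \<le> 0"
    and Q0: "Q 0 = 0"
    and k_inv1: "\<And>x. x \<in> {0..kc} \<Longrightarrow> k (Q x) = x"
    and k_inv2: "\<And>q. q \<in> {0..Q kc} \<Longrightarrow> k q \<in> {0..kc} \<and> Q (k q) = q"
    and dk: "\<And>q. q \<in> {0..Q kc} \<Longrightarrow> (k has_real_derivative k' q) (at q within {0..Q kc})"
  shows "mono_on {0..Q kc} (\<lambda>q. q * k' q - k q) \<and> convex_on {0..Q kc} (\<lambda>q. q * k' q - k q)"
proof -
  have Qkc_pos: "0 < Q kc"
    using strict_mono_onD[OF Q_strict, of 0 kc] kc_pos Q0 by simp
  have k_in: "k q \<in> {0..kc}" if "q \<in> {0..Q kc}" for q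
    using k_inv2 that by blast
  then have k_maps: "k ` {0..Q kc} \<subseteq> {0..kc}"
    by blast
  have k_mono: "mono_on {0..Q kc} k"
    using k_inv2 strict_mono_on_less_eq[OF Q_strict] by (intro mono_onI) metis
  have k'_eq: "k' q = 1 / Q1 (k q)" if "q \<in> {0..Q kc}" for q
    using right_inverse_derivative_mult_eq_1[OF Qkc_pos that dk[OF that] dQ k_maps] k_inv2 that
      Q1_pos[of "k q"] by (simp add: field_simps)
  define g where "g q = - q * Q2 (k q) / Q1 (k q) ^ 3" for q
  have dN: "((\<lambda>q. q * k' q - k q) has_real_derivative g q) (at q within {0..Q kc})"
    if "q \<in> {0..Q kc}" for q
    unfolding g_def using Q1_pos[OF k_in[OF that]]
    by (intro dNdx_has_real_derivative[where Q' = Q1 and Q'' = Q2, OF k'_eq that dk[OF that]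
          dQ1[OF k_in[OF that]] k_maps]) auto
  have Q1_anti: "antimono_on {0..kc} Q1"
    using dQ1 Q2_nonpos by (rule antimono_on_Icc_realI)
  have Q2_anti: "antimono_on {0..kc} Q2"
    using dQ2 Q3_nonpos by (rule antimono_on_Icc_realI)
  have "mono_on {0..Q kc} g"
    unfolding g_def
    by (rule mono_on_dNdx_derivative[OF _ k_mono k_maps Q1_anti Q1_pos Q2_anti Q2_nonpos]) auto
  moreover have "g q \<ge> 0" if "q \<in> {0..Q kc}" for q
    using that Q1_pos[OF k_in[OF that]] Q2_nonpos[OF k_in[OF that]] unfolding g_def
    by (intro divide_nonneg_pos mult_nonpos_nonpos) auto
  ultimately show ?thesis
    using mono_on_Icc_realI[OF dN] convex_on_Icc_realI[OF dN] by blast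
qed

end
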